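(* Let $\Psi$ be the functor generated by a pattern $\{P\}\cup\{(Q_R,q_{R,1},\dots,q_{R,a(R)}):R\in\tau\}$ such that for every $R\in\tau$ and all $1\le i<j\le a(R)$ the images $q_{R,i}(P)$ and $q_{R,j}(P)$ are disjoint subsets of the universe of $Q_R$. If a $\sigma$-structure $A$ has finite duality, then the $\tau$-structure $\Psi A$ also has finite duality.
   Context: A vocabulary is a finite set of relation symbols $R$ each with an arity $a(R)$. A $\sigma$-structure $A$ consists of a nonempty finite universe and, for each $R\in\sigma$, an $a(R)$-ary relation $R(A)$; homomorphisms are relation-preserving maps between universes of structures with the same vocabulary. A set $\mathcal F$ of $\sigma$-structures is a complete set of obstructions for $A$ if for every $\sigma$-structure $B$: $B\to A$ iff no $F\in\mathcal F$ admits a homomorphism to $B$; $A$ has finite duality if it has a finite complete set of obstructions. Pattern functor: fix a $\sigma$-structure $P$ and for each $R\in\tau$ a $\sigma$-structure $Q_R$ with homomorphisms $q_{R,1},\dots,q_{R,a(R)}:P\to Q_R$. For a $\sigma$-structure $A$, $\Psi A$ is the $\tau$-structure whose universe is the set of all homomorphisms $f:P\to A$, and for $R\in\tau$ of arity $r$, $R(\Psi A)$ is the set of tuples $(f_1,\dots,f_r)$ for which there is a homomorphism $g:Q_R\to A$ with $g\circ q_{R,i}=f_i$ for all $i$. *)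

theory Defs
  imports "HOL-Library.FuncSet"
begin

record ('a, 'r) struc =
  univ :: "'a set"
  rel  :: "'r \<Rightarrow> 'a list set"

definition vocabulary :: "'r set \<Rightarrow> bool" where
  "vocabulary S \<longleftrightarrow> finite S"

definition is_structure :: "'r set \<Rightarrow> ('r \<Rightarrow> nat) \<Rightarrow> ('a, 'r) struc \<Rightarrow> bool" where
  "is_structure S ar A \<longleftrightarrow> finite (univ A) \<and> univ A \<noteq> {} \<and>
     (\<forall>R\<in>S. \<forall>t\<in>rel A R. length t = ar R \<and> set t \<subseteq> univ A)"

definition hom :: "'r set \<Rightarrow> ('a, 'r) struc \<Rightarrow> ('b, 'r) struc \<Rightarrow> ('a \<Rightarrow> 'b) \<Rightarrow> bool" where
  "hom S A B h \<longleftrightarrow> (\<forall>x\<in>univ A. h x \<in> univ B) \<and>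
     (\<forall>R\<in>S. \<forall>t\<in>rel A R. map h t \<in> rel B R)"

definition homto :: "'r set \<Rightarrow> ('a, 'r) struc \<Rightarrow> ('b, 'r) struc \<Rightarrow> bool" where
  "homto S A B \<longleftrightarrow> (\<exists>h. hom S A B h)"

text \<open>Since structures are finite, every structure is isomorphic to one whose universe
  consists of natural numbers; we therefore let B and the obstructions range over
  structures with universe in nat.\<close>

definition complete_obstructions ::
  "'r set \<Rightarrow> ('r \<Rightarrow> nat) \<Rightarrow> ('a, 'r) struc \<Rightarrow> (nat, 'r) struc set \<Rightarrow> bool" where
  "complete_obstructions S ar A \<F> \<longleftrightarrow>
     (\<forall>F\<in>\<F>. is_structure S ar F) \<and>
     (\<forall>B :: (nat, 'r) struc. is_structure S ar B \<longrightarrow>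
        (homto S B A \<longleftrightarrow> (\<forall>F\<in>\<F>. \<not> homto S F B)))"

definition finite_duality :: "'r set \<Rightarrow> ('r \<Rightarrow> nat) \<Rightarrow> ('a, 'r) struc \<Rightarrow> bool" where
  "finite_duality S ar A \<longleftrightarrow> (\<exists>\<F>. finite \<F> \<and> complete_obstructions S ar A \<F>)"

text \<open>Sigma-vocabulary (S, ar), tau-vocabulary (T, art).
  For R in T, Q R is a sigma-structure and q R i (for i < art R, 0-indexed) is a
  homomorphism P \<rightarrow> Q R. Homomorphisms P \<rightarrow> A are represented canonically as
  extensional functions on univ P.\<close>

definition pattern :: "'r set \<Rightarrow> ('r \<Rightarrow> nat) \<Rightarrow> 't set \<Rightarrow> ('t \<Rightarrow> nat) \<Rightarrow>
    ('p, 'r) struc \<Rightarrow> ('t \<Rightarrow> ('c, 'r) struc) \<Rightarrow> ('t \<Rightarrow> nat \<Rightarrow> 'p \<Rightarrow> 'c) \<Rightarrow> bool" where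
  "pattern S ar T art P Q q \<longleftrightarrow> vocabulary S \<and> vocabulary T \<and> is_structure S ar P \<and>
     (\<forall>R\<in>T. is_structure S ar (Q R) \<and> (\<forall>i<art R. hom S P (Q R) (q R i)))"

definition Psi_univ :: "'r set \<Rightarrow> ('p, 'r) struc \<Rightarrow> ('a, 'r) struc \<Rightarrow> ('p \<Rightarrow> 'a) set" where
  "Psi_univ S P A = {f. hom S P A f \<and> f \<in> extensional (univ P)}"

definition Psi :: "'r set \<Rightarrow> 't set \<Rightarrow> ('t \<Rightarrow> nat) \<Rightarrow>
    ('p, 'r) struc \<Rightarrow> ('t \<Rightarrow> ('c, 'r) struc) \<Rightarrow> ('t \<Rightarrow> nat \<Rightarrow> 'p \<Rightarrow> 'c) \<Rightarrow>
    ('a, 'r) struc \<Rightarrow> ('p \<Rightarrow> 'a, 't) struc" where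
  "Psi S T art P Q q A =
     \<lparr> univ = Psi_univ S P A,
       rel = (\<lambda>R. if R \<in> T then
                 {fs. length fs = art R \<and> set fs \<subseteq> Psi_univ S P A \<and>
                      (\<exists>g. hom S (Q R) A g \<and>
                           (\<forall>i<art R. \<forall>x\<in>univ P. g (q R i x) = (fs ! i) x))}
               else {}) \<rparr>"

end

theory Submission
  imports Defs
begin

text \<open>
  The proof rests on a left adjoint Lam of Psi. For a tau-structure B, Lam B glues one copy
  of P for every element of B and one copy of Q R for every tuple t of R(B), identifying
  q R i x in the copy at t with x in the copy of P at t ! i; then Lam B maps to A iff B
  maps to Psi A. If B does not map to Psi A, some obstruction F of A maps to Lam B. The
  image of F involves boundedly many pieces, and, by disjointness, the gluing is local:
  F already maps to Lam of an induced substructure C of B whose size is bounded in terms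
  of F. Then C does not map to Psi A, so the tau-structures of bounded size not mapping
  to Psi A form a finite complete set of obstructions.
\<close>

lemma hom_comp:
  assumes "hom S A B g" "hom S B C h"
  shows "hom S A C (h \<circ> g)"
  using assms unfolding hom_def by (metis comp_apply map_map)

lemma homto_trans:
  assumes "homto S A B" "homto S B C"
  shows "homto S A C"
  using assms hom_comp unfolding homto_def by blast

lemma homto_refl: "homto S A A"
  unfolding homto_def hom_def by (intro exI[of _ id]) simp

lemma hom_cong:
  assumes "is_structure S ar C" "\<And>x. x \<in> univ C \<Longrightarrow> f x = g x"
  shows "hom S C D f \<longleftrightarrow> hom S C D g"
proof -
  have "map f t = map g t" if "R \<in> S" "t \<in> rel C R" for R t
  proof -
    have "set t \<subseteq> univ C" using assms(1) that unfolding is_structure_def by auto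
    then show ?thesis using assms(2) by (auto intro: map_cong)
  qed
  then show ?thesis using assms(2) unfolding hom_def by (auto simp del: map_eq_conv)
qed

lemma finite_rel:
  assumes "is_structure S ar C" "R \<in> S"
  shows "finite (rel C R)"
  using assms unfolding is_structure_def
  by (intro finite_subset[OF _ finite_lists_length_eq[of "univ C" "ar R"]]) auto

lemma card_UN_bounded:
  assumes "finite I" "\<And>i. i \<in> I \<Longrightarrow> card (Y i) \<le> M"
  shows "card (\<Union>i\<in>I. Y i) \<le> card I * M"
proof -
  have "card (\<Union>i\<in>I. Y i) \<le> (\<Sum>i\<in>I. card (Y i))" using card_UN_le[OF assms(1)] .
  also have "\<dots> \<le> card I * M" using sum_bounded_above[of I "\<lambda>i. card (Y i)" M] assms(2) by simp
  finally show ?thesis .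
qed

lemma union_of_small_witnesses:
  assumes "finite I"
    and small: "\<And>i. i \<in> I \<Longrightarrow> \<exists>Y. Y \<subseteq> U \<and> card Y \<le> M \<and> Pr i Y"
    and mono: "\<And>i Y Y'. Pr i Y \<Longrightarrow> Y \<subseteq> Y' \<Longrightarrow> Pr i Y'"
  shows "\<exists>X. X \<subseteq> U \<and> card X \<le> card I * M \<and> (\<forall>i\<in>I. Pr i X)"
proof -
  define W where "W i = (SOME Y. Y \<subseteq> U \<and> card Y \<le> M \<and> Pr i Y)" for i
  have W: "W i \<subseteq> U \<and> card (W i) \<le> M \<and> Pr i (W i)" if "i \<in> I" for i
    unfolding W_def using someI_ex[OF small[OF that]] .
  have "(\<Union>i\<in>I. W i) \<subseteq> U" using W by blast
  moreover have "card (\<Union>i\<in>I. W i) \<le> card I * M" using card_UN_bounded[OF assms(1)] W by blast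
  moreover have "Pr i (\<Union>i\<in>I. W i)" if "i \<in> I" for i
    using mono[of i "W i"] W[OF that] that by blast
  ultimately show ?thesis by blast
qed

text \<open>Every structure is homomorphically equivalent to a copy on an initial segment of the
  naturals; this lets obstruction sets, which consist of structures over nat, be applied
  to structures over arbitrary types.\<close>

lemma nat_copy:
  fixes C :: "('x, 'r) struc"
  assumes C: "is_structure S ar C"
  obtains C' :: "(nat, 'r) struc"
  where "is_structure S ar C'" "univ C' = {..<card (univ C)}" "\<forall>R. R \<notin> S \<longrightarrow> rel C' R = {}"
    "homto S C C'" "homto S C' C"
proof -
  have fin: "finite (univ C)" and ne: "univ C \<noteq> {}" using C unfolding is_structure_def by auto
  obtain f where bij: "bij_betw f (univ C) {..<card (univ C)}"
    using ex_bij_betw_finite_nat[OF fin] atLeast0LessThan by metis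
  have img: "f ` univ C = {..<card (univ C)}" and inj: "inj_on f (univ C)"
    using bij unfolding bij_betw_def by auto
  then have lt: "f x < card (univ C)" if "x \<in> univ C" for x using that by blast
  define C' :: "(nat, 'r) struc"
    where "C' = \<lparr>univ = {..<card (univ C)}, rel = (\<lambda>R. if R \<in> S then map f ` rel C R else {})\<rparr>"
  have tuples: "set t \<subseteq> univ C" "length t = ar R" if "R \<in> S" "t \<in> rel C R" for R t
    using C that unfolding is_structure_def by auto
  have "is_structure S ar C'"
    unfolding is_structure_def C'_def using fin ne lt tuples
    by (auto simp: card_gt_0_iff dest!: subsetD lt)
  moreover have "hom S C C' f" using img unfolding hom_def C'_def by auto
  moreover have "hom S C' C (inv_into (univ C) f)"
    unfolding hom_def C'_def using tuples img
    by (auto simp: inv_into_f_f[OF inj] subset_iff map_idI intro: inv_into_into)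
  ultimately show ?thesis
    by (intro that[of C']) (auto simp: homto_def C'_def)
qed

lemma complete_obstructions_any_type:
  fixes C :: "('x, 'r) struc"
  assumes co: "complete_obstructions S ar A \<F>" and C: "is_structure S ar C"
  shows "homto S C A \<longleftrightarrow> (\<forall>F\<in>\<F>. \<not> homto S F C)"
proof -
  obtain C' :: "(nat, 'r) struc"
    where C': "is_structure S ar C'" "homto S C C'" "homto S C' C"
    using nat_copy[OF C] by metis
  have "homto S C A \<longleftrightarrow> homto S C' A" using C' homto_trans by metis
  also have "\<dots> \<longleftrightarrow> (\<forall>F\<in>\<F>. \<not> homto S F C')" using co C'(1) unfolding complete_obstructions_def by blast
  also have "\<dots> \<longleftrightarrow> (\<forall>F\<in>\<F>. \<not> homto S F C)" using C' homto_trans by metis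
  finally show ?thesis .
qed

lemma obstruction_not_homto:
  assumes co: "complete_obstructions S ar A \<F>" and F: "F \<in> \<F>"
  shows "\<not> homto S F A"
  using co F homto_refl unfolding complete_obstructions_def by blast

definition induced :: "'t set \<Rightarrow> ('a, 't) struc \<Rightarrow> 'a set \<Rightarrow> ('a, 't) struc" where
  "induced T B X = \<lparr>univ = X, rel = (\<lambda>R. if R \<in> T then {t \<in> rel B R. set t \<subseteq> X} else {})\<rparr>"

lemma induced_structure:
  assumes "is_structure T art B" "X \<subseteq> univ B" "X \<noteq> {}"
  shows "is_structure T art (induced T B X)"
  using assms finite_subset[OF assms(2)] unfolding is_structure_def induced_def by auto

lemma induced_homto: "X \<subseteq> univ B \<Longrightarrow> homto T (induced T B X) B"
  unfolding homto_def hom_def induced_def by (intro exI[of _ id]) auto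

lemma finite_small_structures:
  assumes "finite T"
  shows "finite {G :: (nat, 't) struc. univ G \<subseteq> {..<N} \<and> is_structure T art G \<and>
                 (\<forall>R. R \<notin> T \<longrightarrow> rel G R = {})}" (is "finite ?G")
proof -
  define mk :: "nat set \<times> ('t \<Rightarrow> nat list set) \<Rightarrow> (nat, 't) struc"
    where "mk p = \<lparr>univ = fst p, rel = (\<lambda>R. if R \<in> T then snd p R else {})\<rparr>" for p
  define D where "D = Pow {..<N} \<times> (\<Pi>\<^sub>E R\<in>T. Pow {t. set t \<subseteq> {..<N} \<and> length t = art R})"
  have "?G \<subseteq> mk ` D"
  proof
    fix G assume G: "G \<in> ?G"
    then have "G = mk (univ G, restrict (rel G) T)"
      unfolding mk_def by (cases G) (auto simp: fun_eq_iff)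
    moreover have "(univ G, restrict (rel G) T) \<in> D"
      using G unfolding D_def is_structure_def by auto
    ultimately show "G \<in> mk ` D" by blast
  qed
  moreover have "finite D"
    unfolding D_def using assms
    by (intro finite_cartesian_product finite_PiE) (auto intro: finite_lists_length_eq)
  ultimately show ?thesis by (meson finite_surj)
qed

definition small_obstacles :: "'t set \<Rightarrow> ('t \<Rightarrow> nat) \<Rightarrow> ('d, 't) struc \<Rightarrow> nat \<Rightarrow> (nat, 't) struc set" where
  "small_obstacles T art D N = {G. univ G \<subseteq> {..<N} \<and> is_structure T art G \<and>
      (\<forall>R. R \<notin> T \<longrightarrow> rel G R = {}) \<and> \<not> homto T G D}"

lemma finite_small_obstacles: "finite T \<Longrightarrow> finite (small_obstacles T art D N)"
  using finite_small_structures[of T N art] by (rule rev_finite_subset) (auto simp: small_obstacles_def)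

lemma small_obstacles_complete:
  fixes D :: "('d, 't) struc" and B :: "(nat, 't) struc"
  assumes small: "\<And>B :: (nat, 't) struc. is_structure T art B \<Longrightarrow> \<not> homto T B D \<Longrightarrow>
       \<exists>C :: (nat, 't) struc. is_structure T art C \<and> card (univ C) \<le> N \<and> homto T C B \<and> \<not> homto T C D"
    and B: "is_structure T art B" and none: "\<forall>G\<in>small_obstacles T art D N. \<not> homto T G B"
  shows "homto T B D"
proof (rule ccontr)
  assume "\<not> homto T B D"
  then obtain C :: "(nat, 't) struc"
    where C: "is_structure T art C" "card (univ C) \<le> N" "homto T C B" "\<not> homto T C D"
    using small[OF B] by blast
  obtain G :: "(nat, 't) struc"
    where G: "is_structure T art G" "univ G = {..<card (univ C)}" "\<forall>R. R \<notin> T \<longrightarrow> rel G R = {}"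
      "homto T C G" "homto T G C"
    using nat_copy[OF C(1)] by metis
  have "\<not> homto T G D" using G(4) C(4) homto_trans by blast
  then have "G \<in> small_obstacles T art D N" using G C(2) unfolding small_obstacles_def by auto
  moreover have "homto T G B" using G(5) C(3) homto_trans by blast
  ultimately show False using none by blast
qed

lemma finite_duality_if_small_obstacles:
  fixes D :: "('d, 't) struc"
  assumes "finite T"
    and small: "\<And>B :: (nat, 't) struc. is_structure T art B \<Longrightarrow> \<not> homto T B D \<Longrightarrow>
       \<exists>C :: (nat, 't) struc. is_structure T art C \<and> card (univ C) \<le> N \<and> homto T C B \<and> \<not> homto T C D"
  shows "finite_duality T art D"
proof -
  have "complete_obstructions T art D (small_obstacles T art D N)"
    unfolding complete_obstructions_def
  proof (intro conjI allI impI ballI)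
    fix G assume "G \<in> small_obstacles T art D N"
    then show "is_structure T art G" unfolding small_obstacles_def by blast
  next
    fix B :: "(nat, 't) struc" assume B: "is_structure T art B"
    show "homto T B D \<longleftrightarrow> (\<forall>G\<in>small_obstacles T art D N. \<not> homto T G B)"
      using small_obstacles_complete[OF small B] homto_trans
      unfolding small_obstacles_def by blast
  qed
  then show ?thesis using finite_small_obstacles[OF assms(1)] unfolding finite_duality_def by blast
qed

definition arity_bound :: "'t set \<Rightarrow> ('t \<Rightarrow> nat) \<Rightarrow> nat" where
  "arity_bound T art = Max (insert 1 (art ` T))"

lemma arity_bound_ge:
  assumes "finite T"
  shows "1 \<le> arity_bound T art" "R \<in> T \<Longrightarrow> art R \<le> arity_bound T art"
  using assms unfolding arity_bound_def by auto

lemma card_tuple_le: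
  assumes "finite T" "is_structure T art B" "R \<in> T" "t \<in> rel B R"
  shows "card (set t) \<le> arity_bound T art"
proof -
  have "length t = art R" using assms(2-4) unfolding is_structure_def by auto
  then show ?thesis using card_length[of t] arity_bound_ge(2)[OF assms(1,3), where art = art] by simp
qed

lemma induced_rel_mono: "X \<subseteq> Y \<Longrightarrow> rel (induced T B X) R \<subseteq> rel (induced T B Y) R"
  and induced_rel_subset: "rel (induced T B X) R \<subseteq> rel B R"
  unfolding induced_def by auto

definition realizes_positions :: "'t set \<Rightarrow> ('t \<Rightarrow> nat) \<Rightarrow> ('b, 't) struc \<Rightarrow> 'b set \<Rightarrow> 'b set \<Rightarrow> bool" where
  "realizes_positions T art B X0 X \<longleftrightarrow>
     (\<forall>b\<in>X0. \<forall>R\<in>T. \<forall>i<art R. \<forall>t\<in>rel B R. t ! i = b \<longrightarrow> (\<exists>t'\<in>rel B R. t' ! i = b \<and> set t' \<subseteq> X))"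

lemma witness_closure:
  assumes T: "finite T" and B: "is_structure T art B" and X0: "X0 \<subseteq> univ B" "finite X0"
  shows "\<exists>X. X0 \<subseteq> X \<and> X \<subseteq> univ B \<and> realizes_positions T art B X0 X \<and>
     card X \<le> card X0 * (1 + card (SIGMA R:T. {..<art R}) * arity_bound T art)"
proof -
  define K where "K = (SIGMA R:T. {..<art R})"
  define I where "I = X0 \<times> K"
  define realized where "realized p W \<longleftrightarrow> (case p of (b, R, i) \<Rightarrow>
      \<forall>t\<in>rel B R. t ! i = b \<longrightarrow> (\<exists>t'\<in>rel B R. t' ! i = b \<and> set t' \<subseteq> W))" for p W
  have "\<exists>W. W \<subseteq> univ B \<and> card W \<le> arity_bound T art \<and> realized p W" if p_I: "p \<in> I" for p
  proof -
    obtain b R i where p: "p = (b, R, i)" and R: "R \<in> T" using p_I unfolding I_def K_def by auto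
    show ?thesis
    proof (cases "\<exists>t\<in>rel B R. t ! i = b")
      case True
      then obtain t where t: "t \<in> rel B R" "t ! i = b" by blast
      then have "set t \<subseteq> univ B" using B R unfolding is_structure_def by auto
      then show ?thesis using t card_tuple_le[OF T B R t(1)] unfolding realized_def p by blast
    qed (auto simp: realized_def p)
  qed
  moreover have "realized p W'" if "realized p W" "W \<subseteq> W'" for p W W'
    using that unfolding realized_def by (fastforce split: prod.splits)
  moreover have "finite I" unfolding I_def K_def using T X0(2) by auto
  ultimately obtain W where W: "W \<subseteq> univ B" "card W \<le> card I * arity_bound T art" "\<forall>p\<in>I. realized p W"
    using union_of_small_witnesses[of I "univ B" "arity_bound T art" realized] by blast
  have "realizes_positions T art B X0 (X0 \<union> W)"
    using W(3) unfolding realizes_positions_def realized_def I_def K_def by fastforce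
  moreover have "card (X0 \<union> W) \<le> card X0 * (1 + card K * arity_bound T art)"
    using card_Un_le[of X0 W] W(2) unfolding I_def by (simp add: card_cartesian_product algebra_simps)
  ultimately show ?thesis using X0(1) W(1) unfolding K_def by blast
qed

text \<open>Points of the gluing of B: a point x of the copy of P at an element b, or a point c of
  the copy of Q R at a tuple t of R(B).\<close>

type_synonym ('p, 'c, 't, 'b) point = "'p \<times> 'b + 'c \<times> 't \<times> 'b list"

locale pattern_functor =
  fixes S :: "'r set" and ar :: "'r \<Rightarrow> nat" and T :: "'t set" and art :: "'t \<Rightarrow> nat"
    and P :: "('p, 'r) struc" and Q :: "'t \<Rightarrow> ('c, 'r) struc" and q :: "'t \<Rightarrow> nat \<Rightarrow> 'p \<Rightarrow> 'c"
  assumes pattern: "pattern S ar T art P Q q"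
begin

lemma P_structure: "is_structure S ar P"
  and Q_structure: "R \<in> T \<Longrightarrow> is_structure S ar (Q R)"
  and finite_S: "finite S"
  and finite_T: "finite T"
  using pattern unfolding pattern_def vocabulary_def by auto

abbreviation \<Psi> :: "('a, 'r) struc \<Rightarrow> ('p \<Rightarrow> 'a, 't) struc" where
  "\<Psi> A \<equiv> Psi S T art P Q q A"

text \<open>A function on points is compatible if it respects the identifications
  of q R i x at t with x at t ! i; two points are glued if no compatible predicate separates
  them, and Lam B is the quotient of the disjoint union of the pieces by this relation.\<close>

definition points :: "('b, 't) struc \<Rightarrow> ('p, 'c, 't, 'b) point set" where
  "points B = {Inl (x, b) | x b. x \<in> univ P \<and> b \<in> univ B} \<union>
              {Inr (c, R, t) | c R t. R \<in> T \<and> t \<in> rel B R \<and> c \<in> univ (Q R)}"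

definition point_tuples :: "('b, 't) struc \<Rightarrow> 'r \<Rightarrow> ('p, 'c, 't, 'b) point list set" where
  "point_tuples B R' =
     {map (\<lambda>x. Inl (x, b)) w | w b. w \<in> rel P R' \<and> b \<in> univ B} \<union>
     {map (\<lambda>c. Inr (c, R, t)) v | v R t. R \<in> T \<and> t \<in> rel B R \<and> v \<in> rel (Q R) R'}"

definition compatible :: "('b, 't) struc \<Rightarrow> (('p, 'c, 't, 'b) point \<Rightarrow> 'z) \<Rightarrow> bool" where
  "compatible B g \<longleftrightarrow> (\<forall>R\<in>T. \<forall>t\<in>rel B R. \<forall>i<art R. \<forall>x\<in>univ P.
      g (Inr (q R i x, R, t)) = g (Inl (x, t ! i)))"

definition glued :: "('b, 't) struc \<Rightarrow> ('p, 'c, 't, 'b) point \<Rightarrow> ('p, 'c, 't, 'b) point \<Rightarrow> bool" where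
  "glued B r r' \<longleftrightarrow> (\<forall>f :: ('p, 'c, 't, 'b) point \<Rightarrow> bool. compatible B f \<longrightarrow> f r = f r')"

definition glue_class :: "('b, 't) struc \<Rightarrow> ('p, 'c, 't, 'b) point \<Rightarrow> ('p, 'c, 't, 'b) point set" where
  "glue_class B r = {r' \<in> points B. glued B r r'}"

definition Lam :: "('b, 't) struc \<Rightarrow> (('p, 'c, 't, 'b) point set, 'r) struc" where
  "Lam B = \<lparr>univ = glue_class B ` points B, rel = (\<lambda>R'. map (glue_class B) ` point_tuples B R')\<rparr>"

definition raw_hom :: "('b, 't) struc \<Rightarrow> ('a, 'r) struc \<Rightarrow> (('p, 'c, 't, 'b) point \<Rightarrow> 'a) \<Rightarrow> bool" where
  "raw_hom B A g \<longleftrightarrow>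
     (\<forall>b\<in>univ B. hom S P A (\<lambda>x. g (Inl (x, b)))) \<and>
     (\<forall>R\<in>T. \<forall>t\<in>rel B R. hom S (Q R) A (\<lambda>c. g (Inr (c, R, t)))) \<and>
     compatible B g"

lemma pointsE:
  assumes "r \<in> points B"
  obtains x b where "r = Inl (x, b)" "x \<in> univ P" "b \<in> univ B"
  | c R t where "r = Inr (c, R, t)" "R \<in> T" "t \<in> rel B R" "c \<in> univ (Q R)"
  using assms unfolding points_def by blast

lemma point_tuplesE:
  assumes "v \<in> point_tuples B R'"
  obtains w b where "v = map (\<lambda>x. Inl (x, b)) w" "w \<in> rel P R'" "b \<in> univ B"
  | w R t where "v = map (\<lambda>c. Inr (c, R, t)) w" "R \<in> T" "t \<in> rel B R" "w \<in> rel (Q R) R'"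
  using assms unfolding point_tuples_def by blast

lemma point_tuples_points:
  assumes "R' \<in> S" "v \<in> point_tuples B R'"
  shows "set v \<subseteq> points B \<and> length v = ar R'"
  using assms(2)
proof (cases rule: point_tuplesE)
  case (1 w b)
  then have "set w \<subseteq> univ P" "length w = ar R'"
    using P_structure assms(1) unfolding is_structure_def by auto
  with 1 show ?thesis by (auto simp: points_def)
next
  case (2 w R t)
  then have "set w \<subseteq> univ (Q R)" "length w = ar R'"
    using Q_structure assms(1) unfolding is_structure_def by auto
  with 2 show ?thesis by (auto simp: points_def)
qed

text \<open>Glued points cannot be distinguished by any compatible function (of any codomain),
  since the equality test against a fixed value is a compatible predicate.\<close>

lemma compatible_glued:
  assumes "compatible B g" "glued B r r'"
  shows "g r = g r'"
proof -
  have "compatible B (\<lambda>s. g s = g r)" using assms(1) unfolding compatible_def by simp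
  then have "(\<lambda>s. g s = g r) r = (\<lambda>s. g s = g r) r'" using assms(2) unfolding glued_def by blast
  then show ?thesis by simp
qed

lemma glued_generator:
  assumes "R \<in> T" "t \<in> rel B R" "i < art R" "x \<in> univ P"
  shows "glued B (Inr (q R i x, R, t)) (Inl (x, t ! i))"
  using assms unfolding glued_def compatible_def by blast

lemma glue_class_eq_iff:
  assumes "r \<in> points B" "r' \<in> points B"
  shows "glue_class B r = glue_class B r' \<longleftrightarrow> glued B r r'"
  using assms unfolding glue_class_def glued_def by blast

lemma glue_class_cong: "glued B r r' \<Longrightarrow> glue_class B r = glue_class B r'"
  unfolding glue_class_def glued_def by auto

lemma compatible_glue_class: "compatible B (glue_class B)"
  using glued_generator glue_class_cong unfolding compatible_def by blast

lemma Lam_structure: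
  assumes B: "is_structure T art B"
  shows "is_structure S ar (Lam B)"
proof -
  have "points B \<subseteq> (\<lambda>(x, b). Inl (x, b)) ` (univ P \<times> univ B) \<union>
      Inr ` (\<Union>R\<in>T. \<Union>t\<in>rel B R. univ (Q R) \<times> {(R, t)})"
    unfolding points_def by force
  moreover have "finite ((\<lambda>(x, b). Inl (x, b)) ` (univ P \<times> univ B) \<union>
      Inr ` (\<Union>R\<in>T. \<Union>t\<in>rel B R. univ (Q R) \<times> {(R, t)}))"
    using P_structure B Q_structure finite_T finite_rel[OF B] unfolding is_structure_def by auto
  ultimately have "finite (points B)" by (rule finite_subset)
  moreover have "points B \<noteq> {}"
    using P_structure B unfolding is_structure_def points_def by auto
  ultimately show ?thesis
    unfolding is_structure_def Lam_def using point_tuples_points by fastforce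
qed

lemma raw_hom_points:
  assumes "raw_hom B A g" "r \<in> points B"
  shows "g r \<in> univ A"
  using assms(2) by (cases rule: pointsE) (use assms(1) in \<open>auto simp: raw_hom_def hom_def\<close>)

lemma raw_hom_point_tuples:
  assumes "raw_hom B A g" "R' \<in> S" "v \<in> point_tuples B R'"
  shows "map g v \<in> rel A R'"
  using assms(3)
  by (cases rule: point_tuplesE) (use assms(1,2) in \<open>auto simp: raw_hom_def hom_def comp_def\<close>)

lemma raw_homI:
  assumes compat: "compatible B g"
    and in_A: "\<And>r. r \<in> points B \<Longrightarrow> g r \<in> univ A"
    and in_rel: "\<And>R' v. R' \<in> S \<Longrightarrow> v \<in> point_tuples B R' \<Longrightarrow> map g v \<in> rel A R'"
  shows "raw_hom B A g"
proof -
  have "hom S P A (\<lambda>x. g (Inl (x, b)))" if b: "b \<in> univ B" for b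
    unfolding hom_def
  proof (intro conjI ballI)
    fix x assume "x \<in> univ P"
    then show "g (Inl (x, b)) \<in> univ A" using in_A b by (simp add: points_def)
  next
    fix R' w assume R': "R' \<in> S" and w: "w \<in> rel P R'"
    have "map (\<lambda>x. Inl (x, b)) w \<in> point_tuples B R'" using w b unfolding point_tuples_def by blast
    from in_rel[OF R' this] show "map (\<lambda>x. g (Inl (x, b))) w \<in> rel A R'" by (simp add: comp_def)
  qed
  moreover have "hom S (Q R) A (\<lambda>c. g (Inr (c, R, t)))" if R: "R \<in> T" and t: "t \<in> rel B R" for R t
    unfolding hom_def
  proof (intro conjI ballI)
    fix c assume "c \<in> univ (Q R)"
    then show "g (Inr (c, R, t)) \<in> univ A" using in_A R t by (simp add: points_def)
  next
    fix R' w assume R': "R' \<in> S" and w: "w \<in> rel (Q R) R'"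
    have "map (\<lambda>c. Inr (c, R, t)) w \<in> point_tuples B R'" using w R t unfolding point_tuples_def by blast
    from in_rel[OF R' this] show "map (\<lambda>c. g (Inr (c, R, t))) w \<in> rel A R'" by (simp add: comp_def)
  qed
  ultimately show ?thesis using compat unfolding raw_hom_def by blast
qed

lemma raw_hom_of_hom:
  assumes h: "hom S (Lam B) A h"
  shows "raw_hom B A (h \<circ> glue_class B)"
proof (rule raw_homI)
  show "compatible B (h \<circ> glue_class B)"
    using compatible_glue_class[of B] unfolding compatible_def by simp
next
  fix r assume "r \<in> points B"
  then show "(h \<circ> glue_class B) r \<in> univ A" using h unfolding hom_def Lam_def by auto
next
  fix R' v assume "R' \<in> S" "v \<in> point_tuples B R'"
  then show "map (h \<circ> glue_class B) v \<in> rel A R'" using h unfolding hom_def Lam_def by auto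
qed

text \<open>Conversely, a raw homomorphism is constant on glue classes and so descends to Lam B.\<close>

lemma hom_of_raw_hom:
  assumes g: "raw_hom B A g"
  shows "hom S (Lam B) A (\<lambda>C. the_elem (g ` C))"
proof -
  have on_class: "the_elem (g ` glue_class B r) = g r" if "r \<in> points B" for r
  proof -
    have "g ` glue_class B r = {g r}"
      using that compatible_glued[of B g r] g unfolding glue_class_def raw_hom_def glued_def by auto
    then show ?thesis by simp
  qed
  show ?thesis
    unfolding hom_def
  proof (intro conjI ballI)
    fix C assume "C \<in> univ (Lam B)"
    then obtain r where "r \<in> points B" "C = glue_class B r" unfolding Lam_def by auto
    then show "the_elem (g ` C) \<in> univ A" using on_class raw_hom_points[OF g] by simp
  next
    fix R' u assume R': "R' \<in> S" and "u \<in> rel (Lam B) R'"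
    then obtain v where v: "v \<in> point_tuples B R'" "u = map (glue_class B) v" unfolding Lam_def by auto
    have "map (\<lambda>C. the_elem (g ` C)) u = map g v"
      using v point_tuples_points[OF R' v(1)] on_class by (auto simp: subset_iff)
    then show "map (\<lambda>C. the_elem (g ` C)) u \<in> rel A R'" using raw_hom_point_tuples[OF g R' v(1)] by simp
  qed
qed

lemma homto_Lam_iff: "homto S (Lam B) A \<longleftrightarrow> (\<exists>g. raw_hom B A g)"
  using raw_hom_of_hom hom_of_raw_hom unfolding homto_def by blast

text \<open>Homomorphisms into the image of the pattern functor correspond to the same compatible
  families: a homomorphism B -> Psi A provides the maps on the copies of P, and the
  relations of Psi A provide the maps on the copies of the Q R.\<close>

lemma raw_hom_of_Psi_hom:
  assumes B: "is_structure T art B" and \<phi>: "hom T B (\<Psi> A) \<phi>"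
  shows "\<exists>g. raw_hom B A g"
proof -
  have \<phi>_hom: "hom S P A (\<phi> b)" if "b \<in> univ B" for b
    using \<phi> that unfolding hom_def Psi_def Psi_univ_def by auto
  have "\<exists>G. hom S (Q R) A G \<and> (\<forall>i<art R. \<forall>x\<in>univ P. G (q R i x) = \<phi> (t ! i) x)"
    if "R \<in> T" "t \<in> rel B R" for R t
  proof -
    have "map \<phi> t \<in> rel (\<Psi> A) R" using \<phi> that unfolding hom_def by auto
    moreover have "length t = art R" using B that unfolding is_structure_def by auto
    ultimately show ?thesis using that by (auto simp: Psi_def)
  qed
  then obtain G where G: "\<And>R t. R \<in> T \<Longrightarrow> t \<in> rel B R \<Longrightarrow>
      hom S (Q R) A (G R t) \<and> (\<forall>i<art R. \<forall>x\<in>univ P. G R t (q R i x) = \<phi> (t ! i) x)"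
    by metis
  define g where "g r = (case r of Inl (x, b) \<Rightarrow> \<phi> b x | Inr (c, R, t) \<Rightarrow> G R t c)" for r
  have "raw_hom B A g"
    unfolding raw_hom_def compatible_def g_def using \<phi>_hom G by (auto simp: eta_contract_eq)
  then show ?thesis by blast
qed

lemma raw_hom_Psi_univ:
  assumes g: "raw_hom B A g" and b: "b \<in> univ B"
  shows "restrict (\<lambda>x. g (Inl (x, b))) (univ P) \<in> Psi_univ S P A"
proof -
  have "hom S P A (\<lambda>x. g (Inl (x, b)))" using g b unfolding raw_hom_def by blast
  then have "hom S P A (restrict (\<lambda>x. g (Inl (x, b))) (univ P))"
    using hom_cong[OF P_structure, of "restrict (\<lambda>x. g (Inl (x, b))) (univ P)"] by simp
  then show ?thesis unfolding Psi_univ_def by simp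
qed

lemma Psi_hom_of_raw_hom:
  assumes B: "is_structure T art B" and g: "raw_hom B A g"
  shows "hom T B (\<Psi> A) (\<lambda>b. restrict (\<lambda>x. g (Inl (x, b))) (univ P))" (is "hom T B (\<Psi> A) ?\<phi>")
  unfolding hom_def
proof (intro conjI ballI)
  fix b assume "b \<in> univ B"
  then show "?\<phi> b \<in> univ (\<Psi> A)" using raw_hom_Psi_univ[OF g] by (simp add: Psi_def)
next
  fix R t assume R: "R \<in> T" and t: "t \<in> rel B R"
  have len: "length t = art R" and set: "set t \<subseteq> univ B"
    using B R t unfolding is_structure_def by auto
  have "hom S (Q R) A (\<lambda>c. g (Inr (c, R, t)))" using g R t unfolding raw_hom_def by blast
  moreover have "g (Inr (q R i x, R, t)) = (map ?\<phi> t ! i) x" if "i < art R" "x \<in> univ P" for i x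
    using g R t that len unfolding raw_hom_def compatible_def by simp
  ultimately show "map ?\<phi> t \<in> rel (\<Psi> A) R"
    using R len set raw_hom_Psi_univ[OF g] by (auto simp: Psi_def)
qed

lemma homto_Psi_iff:
  assumes "is_structure T art B"
  shows "homto T B (\<Psi> A) \<longleftrightarrow> (\<exists>g. raw_hom B A g)"
  using raw_hom_of_Psi_hom[OF assms] Psi_hom_of_raw_hom[OF assms] unfolding homto_def by blast

lemma Lam_adjunction:
  assumes "is_structure T art B"
  shows "homto S (Lam B) A \<longleftrightarrow> homto T B (\<Psi> A)"
  using homto_Lam_iff[of B A] homto_Psi_iff[OF assms, of A] by simp

lemma points_mono:
  assumes "univ C \<subseteq> univ B" "\<And>R. rel C R \<subseteq> rel B R"
  shows "points C \<subseteq> points B" "point_tuples C R' \<subseteq> point_tuples B R'"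
  using assms unfolding points_def point_tuples_def by blast+

lemma induced_points_mono:
  assumes "X \<subseteq> Y"
  shows "points (induced T B X) \<subseteq> points (induced T B Y)"
    "point_tuples (induced T B X) R' \<subseteq> point_tuples (induced T B Y) R'"
proof -
  have "univ (induced T B X) \<subseteq> univ (induced T B Y)" using assms by (simp add: induced_def)
  from points_mono[OF this induced_rel_mono[OF assms]]
  show "points (induced T B X) \<subseteq> points (induced T B Y)"
    "point_tuples (induced T B X) R' \<subseteq> point_tuples (induced T B Y) R'" by blast+
qed

lemma induced_points_subset:
  assumes "X \<subseteq> univ B"
  shows "points (induced T B X) \<subseteq> points B"
proof -
  have "univ (induced T B X) \<subseteq> univ B" using assms by (simp add: induced_def)
  from points_mono(1)[OF this induced_rel_subset] show ?thesis .
qed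

lemma point_anchor:
  assumes B: "is_structure T art B" and r: "r \<in> points B"
  shows "\<exists>Y. Y \<subseteq> univ B \<and> card Y \<le> arity_bound T art \<and> r \<in> points (induced T B Y)"
  using r
proof (cases rule: pointsE)
  case (1 x b)
  then have "r \<in> points (induced T B {b})" by (auto simp: points_def induced_def)
  then show ?thesis using 1 arity_bound_ge(1)[OF finite_T] by (intro exI[of _ "{b}"]) auto
next
  case (2 c R t)
  then have "r \<in> points (induced T B (set t))" by (auto simp: points_def induced_def)
  moreover have "set t \<subseteq> univ B" using B 2 unfolding is_structure_def by auto
  ultimately show ?thesis using card_tuple_le[OF finite_T B 2(2,3)] by blast
qed

lemma tuple_anchor:
  assumes B: "is_structure T art B" and v: "v \<in> point_tuples B R'"
  shows "\<exists>Y. Y \<subseteq> univ B \<and> card Y \<le> arity_bound T art \<and> v \<in> point_tuples (induced T B Y) R'"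
  using v
proof (cases rule: point_tuplesE)
  case (1 w b)
  then have "v \<in> point_tuples (induced T B {b}) R'" by (auto simp: point_tuples_def induced_def)
  then show ?thesis using 1 arity_bound_ge(1)[OF finite_T] by (intro exI[of _ "{b}"]) auto
next
  case (2 w R t)
  then have "t \<in> rel (induced T B (set t)) R" by (simp add: induced_def)
  then have "v \<in> point_tuples (induced T B (set t)) R'" using 2 unfolding point_tuples_def by blast
  moreover have "set t \<subseteq> univ B" using B 2 unfolding is_structure_def by auto
  ultimately show ?thesis using card_tuple_le[OF finite_T B 2(2,3)] by blast
qed

text \<open>Indexing the
  elements and the tuples of F by one set, this is a conjunction of anchoring conditions.\<close>

definition represented_over ::
    "('b, 't) struc \<Rightarrow> ('f, 'r) struc \<Rightarrow> ('f \<Rightarrow> ('p, 'c, 't, 'b) point set) \<Rightarrow> 'b set \<Rightarrow> bool" where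
  "represented_over B F h X0 \<longleftrightarrow>
     (\<forall>y\<in>univ F. \<exists>r\<in>points (induced T B X0). h y = glue_class B r) \<and>
     (\<forall>R'\<in>S. \<forall>u\<in>rel F R'. \<exists>v\<in>point_tuples (induced T B X0) R'. map h u = map (glue_class B) v)"

definition anchored ::
    "('b, 't) struc \<Rightarrow> ('f \<Rightarrow> ('p, 'c, 't, 'b) point set) \<Rightarrow> 'f + 'r \<times> 'f list \<Rightarrow> 'b set \<Rightarrow> bool" where
  "anchored B h i Y \<longleftrightarrow> (case i of
      Inl y \<Rightarrow> \<exists>r\<in>points (induced T B Y). h y = glue_class B r
    | Inr (R', u) \<Rightarrow> \<exists>v\<in>point_tuples (induced T B Y) R'. map h u = map (glue_class B) v)"

lemma represented_over_iff:
  "represented_over B F h X0 \<longleftrightarrow> (\<forall>i\<in>univ F <+> (SIGMA R':S. rel F R'). anchored B h i X0)"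
  (is "?L \<longleftrightarrow> ?R")
proof
  assume ?L
  then show ?R unfolding represented_over_def anchored_def by auto
next
  assume all: ?R
  have "anchored B h (Inl y) X0" if "y \<in> univ F" for y
    using all[rule_format, OF InlI[OF that]] .
  moreover have "anchored B h (Inr (R', u)) X0" if "R' \<in> S" "u \<in> rel F R'" for R' u
    using all[rule_format, OF InrI] that by blast
  ultimately show ?L unfolding represented_over_def anchored_def by simp
qed

lemma anchored_mono: "anchored B h i Y \<Longrightarrow> Y \<subseteq> Y' \<Longrightarrow> anchored B h i Y'"
  using induced_points_mono[of Y Y' B] unfolding anchored_def by (auto split: sum.splits) blast

lemma hom_anchored:
  assumes B: "is_structure T art B" and h: "hom S F (Lam B) h"
    and i: "i \<in> univ F <+> (SIGMA R':S. rel F R')"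
  shows "\<exists>Y. Y \<subseteq> univ B \<and> card Y \<le> arity_bound T art \<and> anchored B h i Y"
proof (cases i)
  case (Inl y)
  then have "h y \<in> glue_class B ` points B" using h i unfolding hom_def Lam_def by auto
  then obtain r where r: "r \<in> points B" "h y = glue_class B r" by blast
  obtain Y where "Y \<subseteq> univ B" "card Y \<le> arity_bound T art" "r \<in> points (induced T B Y)"
    using point_anchor[OF B r(1)] by blast
  then show ?thesis using r(2) Inl unfolding anchored_def by auto
next
  case (Inr p)
  then obtain R' u where p: "p = (R', u)" "R' \<in> S" "u \<in> rel F R'" using i by auto
  then have "map h u \<in> map (glue_class B) ` point_tuples B R'" using h unfolding hom_def Lam_def by auto
  then obtain v where v: "v \<in> point_tuples B R'" "map h u = map (glue_class B) v" by blast
  obtain Y where "Y \<subseteq> univ B" "card Y \<le> arity_bound T art" "v \<in> point_tuples (induced T B Y) R'"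
    using tuple_anchor[OF B v(1)] by blast
  then show ?thesis using v(2) Inr p unfolding anchored_def by auto
qed

definition support_bound :: "('f, 'r) struc \<Rightarrow> nat" where
  "support_bound F = 1 + card (univ F <+> (SIGMA R':S. rel F R')) * arity_bound T art"

text \<open>A homomorphism from F into a gluing is represented over a nonempty set whose size is
  bounded in terms of F: combine the anchors of its values and of the images of its tuples.\<close>

lemma small_support:
  fixes F :: "('f, 'r) struc"
  assumes B: "is_structure T art B" and F: "is_structure S ar F" and h: "hom S F (Lam B) h"
  shows "\<exists>X0. X0 \<subseteq> univ B \<and> X0 \<noteq> {} \<and> card X0 \<le> support_bound F \<and> represented_over B F h X0"
proof -
  define I where "I = univ F <+> (SIGMA R':S. rel F R')"
  have fin: "finite I" unfolding I_def using F finite_S finite_rel[OF F] unfolding is_structure_def by auto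
  have small: "\<exists>Y. Y \<subseteq> univ B \<and> card Y \<le> arity_bound T art \<and> anchored B h i Y" if "i \<in> I" for i
    using hom_anchored[OF B h] that unfolding I_def .
  have "\<exists>X. X \<subseteq> univ B \<and> card X \<le> card I * arity_bound T art \<and> (\<forall>i\<in>I. anchored B h i X)"
    by (rule union_of_small_witnesses[where Pr = "anchored B h"]) (fact fin, fact small, fact anchored_mono)
  then obtain X where X: "X \<subseteq> univ B" "card X \<le> card I * arity_bound T art" "\<forall>i\<in>I. anchored B h i X"
    by blast
  obtain b0 where b0: "b0 \<in> univ B" using B unfolding is_structure_def by auto
  have "\<forall>i\<in>I. anchored B h i (insert b0 X)"
  proof
    fix i assume "i \<in> I"
    with X(3) have "anchored B h i X" by blast
    then show "anchored B h i (insert b0 X)" by (rule anchored_mono) blast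
  qed
  then have "represented_over B F h (insert b0 X)" unfolding represented_over_iff I_def .
  moreover have "card (insert b0 X) \<le> support_bound F"
    using X(2) unfolding support_bound_def I_def by (intro card_insert_le_m1) simp_all
  ultimately show ?thesis using X(1) b0 by (intro exI[of _ "insert b0 X"]) simp
qed

end

locale disjoint_pattern = pattern_functor S ar T art P Q q
  for S :: "'r set" and ar :: "'r \<Rightarrow> nat" and T :: "'t set" and art :: "'t \<Rightarrow> nat"
    and P :: "('p, 'r) struc" and Q :: "'t \<Rightarrow> ('c, 'r) struc" and q :: "'t \<Rightarrow> nat \<Rightarrow> 'p \<Rightarrow> 'c" +
  assumes disjoint_images:
    "\<forall>R\<in>T. \<forall>i j. i < j \<and> j < art R \<longrightarrow> q R i ` univ P \<inter> q R j ` univ P = {}"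
begin

text \<open>By disjointness, an element of Q R in the image of some q R i determines the position i.\<close>

definition position :: "'t \<Rightarrow> 'c \<Rightarrow> nat" where
  "position R c = (THE i. i < art R \<and> c \<in> q R i ` univ P)"

lemma position_q:
  assumes "R \<in> T" "i < art R" "x \<in> univ P"
  shows "position R (q R i x) = i"
  unfolding position_def
proof (rule the_equality)
  show "i < art R \<and> q R i x \<in> q R i ` univ P" using assms by auto
next
  fix j assume j: "j < art R \<and> q R i x \<in> q R j ` univ P"
  show "j = i"
  proof (rule ccontr)
    assume "j \<noteq> i"
    then have "i < j \<or> j < i" by auto
    then show False using disjoint_images assms j by blast
  qed
qed

text \<open>Extension of a predicate f on points to a predicate that agrees with f on the points
  over X0 and depends only on them: on a copy of Q R not lying over X0 the value is
  transported along the (unique) position at which the point meets a copy of P.\<close>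

definition local_extension ::
    "'b set \<Rightarrow> (('p, 'c, 't, 'b) point \<Rightarrow> bool) \<Rightarrow> ('p, 'c, 't, 'b) point \<Rightarrow> bool" where
  "local_extension X0 f r = (case r of
      Inl (x, b) \<Rightarrow> b \<in> X0 \<and> f (Inl (x, b))
    | Inr (c, R, t) \<Rightarrow>
        if set t \<subseteq> X0 then f (Inr (c, R, t))
        else (\<exists>x\<in>univ P. q R (position R c) x = c \<and> t ! position R c \<in> X0 \<and>
                         f (Inl (x, t ! position R c))))"

lemma local_extension_agrees:
  "r \<in> points (induced T B X0) \<Longrightarrow> local_extension X0 f r = f r"
  by (auto elim!: pointsE simp: local_extension_def induced_def)

text \<open>Disjointness enters through
  position_q; realizing positions ensures that two points of P with the same image under
  q R i, placed over an element of X0, are already identified over X.\<close>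

lemma compatible_local_extension:
  assumes B: "is_structure T art B" and X0X: "X0 \<subseteq> X"
    and real: "realizes_positions T art B X0 X" and f: "compatible (induced T B X) f"
  shows "compatible B (local_extension X0 f)"
  unfolding compatible_def
proof (intro ballI allI impI)
  fix R t i x assume R: "R \<in> T" and t: "t \<in> rel B R" and i: "i < art R" and x: "x \<in> univ P"
  have f_glue: "f (Inr (q R i y, R, t')) = f (Inl (y, t' ! i))"
    if "t' \<in> rel B R" "set t' \<subseteq> X" "y \<in> univ P" for t' y
    using f R i that unfolding compatible_def induced_def by auto
  have ti: "t ! i \<in> set t" using B R t i unfolding is_structure_def by auto
  show "local_extension X0 f (Inr (q R i x, R, t)) = local_extension X0 f (Inl (x, t ! i))"
  proof (cases "set t \<subseteq> X0")
    case True
    then show ?thesis using f_glue[OF t _ x] X0X ti by (auto simp: local_extension_def)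
  next
    case False
    have same_image: "f (Inl (y, t ! i)) = f (Inl (x, t ! i))"
      if y: "y \<in> univ P" and img: "q R i y = q R i x" and ti_X0: "t ! i \<in> X0" for y
    proof -
      obtain t' where t': "t' \<in> rel B R" "t' ! i = t ! i" "set t' \<subseteq> X"
        using real ti_X0 R i t unfolding realizes_positions_def by blast
      show ?thesis using f_glue[OF t'(1,3) y] f_glue[OF t'(1,3) x] img t'(2) by simp
    qed
    show ?thesis
      using False x position_q[OF R i x] same_image by (auto simp: local_extension_def)
  qed
qed

lemma glued_local:
  assumes B: "is_structure T art B" and X0X: "X0 \<subseteq> X"
    and real: "realizes_positions T art B X0 X"
    and r: "r \<in> points (induced T B X0)" and r': "r' \<in> points (induced T B X0)"
    and glued: "glued B r r'"
  shows "glued (induced T B X) r r'"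
  unfolding glued_def
proof (intro allI impI)
  fix f :: "_ \<Rightarrow> bool" assume "compatible (induced T B X) f"
  then have "local_extension X0 f r = local_extension X0 f r'"
    using compatible_glued[OF compatible_local_extension[OF B X0X real] glued] by blast
  then show "f r = f r'" using local_extension_agrees[OF r] local_extension_agrees[OF r'] by simp
qed

lemma glue_classes_local:
  assumes B: "is_structure T art B" and X0X: "X0 \<subseteq> X" and XB: "X \<subseteq> univ B"
    and real: "realizes_positions T art B X0 X"
    and rs: "set rs \<subseteq> points (induced T B X0)" and vs: "set vs \<subseteq> points (induced T B X0)"
    and eq: "map (glue_class B) rs = map (glue_class B) vs"
  shows "map (glue_class (induced T B X)) rs = map (glue_class (induced T B X)) vs"
proof -
  have into_B: "points (induced T B X0) \<subseteq> points B"
    using induced_points_subset[OF order_trans[OF X0X XB]] .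
  have len: "length rs = length vs" using eq by (metis length_map)
  show ?thesis
  proof (rule nth_equalityI)
    fix k assume "k < length (map (glue_class (induced T B X)) rs)"
    then have k: "k < length rs" by simp
    then have r: "rs ! k \<in> points (induced T B X0)" and v: "vs ! k \<in> points (induced T B X0)"
      using rs vs len by auto
    have "glue_class B (rs ! k) = glue_class B (vs ! k)"
      using arg_cong[OF eq, of "\<lambda>xs. xs ! k"] k len by simp
    then have "glued B (rs ! k) (vs ! k)" using glue_class_eq_iff into_B r v by blast
    then have "glue_class (induced T B X) (rs ! k) = glue_class (induced T B X) (vs ! k)"
      using glue_class_cong glued_local[OF B X0X real r v] by blast
    then show "map (glue_class (induced T B X)) rs ! k = map (glue_class (induced T B X)) vs ! k"
      using k len by simp
  qed (simp add: len)
qed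

text \<open>A homomorphism F -> Lam B represented over X0 factors through Lam of the substructure
  induced on any X realizing the positions of X0: send each element to the glue class over X
  of a representative over X0.\<close>

lemma hom_into_induced:
  assumes B: "is_structure T art B" and F: "is_structure S ar F"
    and X0X: "X0 \<subseteq> X" and XB: "X \<subseteq> univ B" and real: "realizes_positions T art B X0 X"
    and repr: "represented_over B F h X0"
  shows "homto S F (Lam (induced T B X))"
proof -
  have "\<forall>y\<in>univ F. \<exists>r. r \<in> points (induced T B X0) \<and> h y = glue_class B r"
    using repr unfolding represented_over_def by blast
  then obtain rep where rep: "\<forall>y\<in>univ F. rep y \<in> points (induced T B X0) \<and> h y = glue_class B (rep y)"
    by (auto dest!: bchoice)
  have "hom S F (Lam (induced T B X)) (glue_class (induced T B X) \<circ> rep)"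
    unfolding hom_def
  proof (intro conjI ballI)
    fix y assume "y \<in> univ F"
    then have "rep y \<in> points (induced T B X)" using rep induced_points_mono(1)[OF X0X, of B] by blast
    then show "(glue_class (induced T B X) \<circ> rep) y \<in> univ (Lam (induced T B X))"
      unfolding Lam_def by simp
  next
    fix R' u assume R': "R' \<in> S" and u: "u \<in> rel F R'"
    obtain v where v: "v \<in> point_tuples (induced T B X0) R'" "map h u = map (glue_class B) v"
      using repr R' u unfolding represented_over_def by blast
    have u_univ: "set u \<subseteq> univ F" using F R' u unfolding is_structure_def by auto
    have rs: "set (map rep u) \<subseteq> points (induced T B X0)" using rep u_univ by auto
    have vs: "set v \<subseteq> points (induced T B X0)" using point_tuples_points[OF R' v(1)] by blast
    have "map (glue_class B \<circ> rep) u = map h u"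
      by (rule map_cong) (use rep u_univ in auto)
    then have "map (glue_class B) (map rep u) = map (glue_class B) v" using v(2) by simp
    from glue_classes_local[OF B X0X XB real rs vs this]
    have "map (glue_class (induced T B X) \<circ> rep) u = map (glue_class (induced T B X)) v" by simp
    moreover have "v \<in> point_tuples (induced T B X) R'"
      using induced_points_mono(2)[OF X0X, of B R'] v(1) by blast
    ultimately show "map (glue_class (induced T B X) \<circ> rep) u \<in> rel (Lam (induced T B X)) R'"
      unfolding Lam_def by auto
  qed
  then show ?thesis unfolding homto_def by blast
qed

definition restriction_bound :: "('f, 'r) struc \<Rightarrow> nat" where
  "restriction_bound F = support_bound F * (1 + card (SIGMA R:T. {..<art R}) * arity_bound T art)"

lemma small_restriction:
  fixes F :: "('f, 'r) struc"
  assumes B: "is_structure T art B" and F: "is_structure S ar F" and FB: "homto S F (Lam B)"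
  shows "\<exists>X. X \<subseteq> univ B \<and> X \<noteq> {} \<and> card X \<le> restriction_bound F \<and>
     homto S F (Lam (induced T B X))"
proof -
  obtain h where h: "hom S F (Lam B) h" using FB unfolding homto_def by blast
  obtain X0 where X0: "X0 \<subseteq> univ B" "X0 \<noteq> {}" "card X0 \<le> support_bound F" "represented_over B F h X0"
    using small_support[OF B F h] by blast
  have "finite X0" using X0(1) B finite_subset unfolding is_structure_def by blast
  then obtain X where X: "X0 \<subseteq> X" "X \<subseteq> univ B" "realizes_positions T art B X0 X"
      "card X \<le> card X0 * (1 + card (SIGMA R:T. {..<art R}) * arity_bound T art)"
    using witness_closure[OF finite_T B X0(1)] by blast
  have "card X \<le> restriction_bound F"
    using X(4) X0(3) unfolding restriction_bound_def by (meson le_trans mult_le_mono1)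
  then show ?thesis using hom_into_induced[OF B F X(1-3) X0(4)] X(1,2) X0(2) by blast
qed

lemma Psi_finite_duality:
  assumes "finite_duality S ar A"
  shows "finite_duality T art (\<Psi> A)"
proof -
  obtain \<F> where fin: "finite \<F>" and co: "complete_obstructions S ar A \<F>"
    using assms unfolding finite_duality_def by blast
  define N where "N = (\<Sum>F\<in>\<F>. restriction_bound F)"
  show ?thesis
  proof (rule finite_duality_if_small_obstacles[OF finite_T])
    fix B :: "(nat, 't) struc" assume B: "is_structure T art B" and "\<not> homto T B (\<Psi> A)"
    then have "\<not> homto S (Lam B) A" using Lam_adjunction by blast
    then obtain F where F: "F \<in> \<F>" "homto S F (Lam B)"
      using complete_obstructions_any_type[OF co Lam_structure[OF B]] by blast
    have F_structure: "is_structure S ar F" using co F(1) unfolding complete_obstructions_def by blast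
    obtain X where X: "X \<subseteq> univ B" "X \<noteq> {}" "card X \<le> restriction_bound F"
        "homto S F (Lam (induced T B X))"
      using small_restriction[OF B F_structure F(2)] by blast
    let ?C = "induced T B X"
    have C: "is_structure T art ?C" using induced_structure[OF B X(1,2)] .
    have "\<not> homto T ?C (\<Psi> A)"
    proof
      assume "homto T ?C (\<Psi> A)"
      then have "homto S (Lam ?C) A" using Lam_adjunction[OF C] by blast
      then have "homto S F A" using X(4) homto_trans by blast
      then show False using obstruction_not_homto[OF co F(1)] by blast
    qed
    moreover have "card (univ ?C) \<le> N"
      using X(3) member_le_sum[of F \<F> restriction_bound] F(1) fin by (simp add: induced_def N_def)
    ultimately show "\<exists>C :: (nat, 't) struc. is_structure T art C \<and> card (univ C) \<le> N \<and>
        homto T C B \<and> \<not> homto T C (\<Psi> A)"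
      using C induced_homto[OF X(1)] by blast
  qed
qed

end

text \<open>The theorem: an instance of the preservation result (which does not need the
  hypothesis that A is a structure).\<close>

theorem theorem4p5:
  fixes S :: "'r set" and ar :: "'r \<Rightarrow> nat"
    and T :: "'t set" and art :: "'t \<Rightarrow> nat"
    and P :: "('p, 'r) struc" and Q :: "'t \<Rightarrow> ('c, 'r) struc"
    and q :: "'t \<Rightarrow> nat \<Rightarrow> 'p \<Rightarrow> 'c"
    and A :: "('a, 'r) struc"
  assumes "pattern S ar T art P Q q"
    and "\<forall>R\<in>T. \<forall>i j. i < j \<and> j < art R \<longrightarrow> q R i ` univ P \<inter> q R j ` univ P = {}"
    and "is_structure S ar A"
    and "finite_duality S ar A"
  shows "finite_duality T art (Psi S T art P Q q A)"
proof -
  interpret disjoint_pattern S ar T art P Q q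
    using assms(1,2) by (simp add: disjoint_pattern_def disjoint_pattern_axioms_def pattern_functor_def)
  show ?thesis using Psi_finite_duality[OF assms(4)] .
qed

end
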